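(* For every instance such that $|S_2|=0$ and $\pi_1+\pi_3+\pi_4-1=0$, we have $H^{PW''}\le \tfrac{3}{2}H^*$.
   Context: An instance consists of an integer $n\ge 1$ and growth rates $1=h(1)\ge h(2)\ge\cdots\ge h(n)>0$ of bamboos $b_1,\dots,b_n$. Bamboo Garden Trimming (discrete version): - All heights are $0$ initially. - On each day $t=1,2,\dots$ every bamboo $b_j$ grows by $h(j)$. - At the end of each day the gardener cuts exactly one bamboo $\sigma(t)\in\{1,\dots,n\}$ back to height $0$. The height of a schedule $\sigma:\mathbb{N}\to\{1,\dots,n\}$ is the supremum, over all days $t$ and all $j$, of the height of $b_j$ at the end of day $t$ just before the cut. $H^*$ denotes the infimum of this height over all schedules. Value of algorithm PW'': - Split $\{1,\dots,n\}$ into four sets: - $S_1=\{j: \tfrac23<h(j)\le 1\}$; - $S_2=\{j:\tfrac12<h(j)\le\tfrac23\}$; - $S_3=\{j: h(j)\le\tfrac12 \text{ and } \tfrac23 2^{-k}<h(j)\le 2^{-k}\text{ for some integer }k\ge1\}$; - $S_4=\{j: h(j)\le\tfrac12\text{ and } 2^{-(k+1)}<h(j)\le \tfrac23 2^{-k}\text{ for some integer }k\ge 1\}$. - Modified growths: $h''(j)=2^{-k}$ for $j\in S_3$ and $h''(j)=\tfrac23 2^{-k}$ for $j\in S_4$, with $k$ as in the definition of the set. - Let $\pi_1=|S_1|$, $sh_3=\sum_{j\in S_3}h''(j)$, $sh_4=\sum_{j\in S_4}h''(j)$, $\pi_3=\lfloor sh_3\rfloor$, $\pi_4=\lfloor sh_4\rfloor$,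 $f_3=sh_3-\pi_3$, $f_4=sh_4-\pi_4$. - Option (a): $\pi_R(a)=\lceil f_3+f_4\rceil$ and $z(a)=\pi_1+|S_2|+\pi_3+\pi_4+\pi_R(a)$. - Option (b): if $S_2=\emptyset$ put $z(b)=+\infty$. Otherwise let $h^*=\max_{j\in S_2}h(j)$ and $f_2=\tfrac12$ if $|S_2|$ is odd, $f_2=0$ if $|S_2|$ is even. Then $\pi_R(b)=\lceil f_2+f_3+f_4\rceil$ and $z(b)=2h^*\,(\pi_1+\lfloor |S_2|/2\rfloor+\pi_3+\pi_4+\pi_R(b))$. - The value returned by algorithm PW'' is $H^{PW''}=\min\{z(a),z(b)\}$. The paper takes this as the maximum height of the periodic pinwheel trimming schedule that it builds from these partitions. *)

theory Defs
  imports Complex_Main "HOL-Library.Extended_Real"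
begin

definition instance_ok :: "nat \<Rightarrow> (nat \<Rightarrow> real) \<Rightarrow> bool" where
  "instance_ok n h \<longleftrightarrow> n \<ge> 1 \<and> h 1 = 1 \<and>
     (\<forall>i j. 1 \<le> i \<longrightarrow> i \<le> j \<longrightarrow> j \<le> n \<longrightarrow> h j \<le> h i) \<and> h n > 0"

text \<open>A schedule: on each day t \<ge> 1 one bamboo sigma t \<in> {1..n} is cut (sigma 0 is irrelevant).\<close>
definition schedule :: "nat \<Rightarrow> (nat \<Rightarrow> nat) \<Rightarrow> bool" where
  "schedule n \<sigma> \<longleftrightarrow> (\<forall>t\<ge>1. \<sigma> t \<in> {1..n})"

definition last_cut :: "(nat \<Rightarrow> nat) \<Rightarrow> nat \<Rightarrow> nat \<Rightarrow> nat" where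
  "last_cut \<sigma> j t = Max (insert 0 {s \<in> {1..<t}. \<sigma> s = j})"

text \<open>Height of bamboo j at the end of day t, just before the cut.\<close>
definition bamboo_height :: "(nat \<Rightarrow> real) \<Rightarrow> (nat \<Rightarrow> nat) \<Rightarrow> nat \<Rightarrow> nat \<Rightarrow> real" where
  "bamboo_height h \<sigma> j t = h j * real (t - last_cut \<sigma> j t)"

definition schedule_height :: "nat \<Rightarrow> (nat \<Rightarrow> real) \<Rightarrow> (nat \<Rightarrow> nat) \<Rightarrow> ereal" where
  "schedule_height n h \<sigma> = (SUP p \<in> {1..} \<times> {1..n}. ereal (bamboo_height h \<sigma> (snd p) (fst p)))"

definition H_opt :: "nat \<Rightarrow> (nat \<Rightarrow> real) \<Rightarrow> ereal" where
  "H_opt n h = (INF \<sigma> \<in> {\<sigma>. schedule n \<sigma>}. schedule_height n h \<sigma>)"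

definition S1 :: "nat \<Rightarrow> (nat \<Rightarrow> real) \<Rightarrow> nat set" where
  "S1 n h = {j \<in> {1..n}. 2/3 < h j \<and> h j \<le> 1}"
definition S2 :: "nat \<Rightarrow> (nat \<Rightarrow> real) \<Rightarrow> nat set" where
  "S2 n h = {j \<in> {1..n}. 1/2 < h j \<and> h j \<le> 2/3}"
definition S3 :: "nat \<Rightarrow> (nat \<Rightarrow> real) \<Rightarrow> nat set" where
  "S3 n h = {j \<in> {1..n}. h j \<le> 1/2 \<and>
     (\<exists>k::nat. k \<ge> 1 \<and> 2/3 * (1/2)^k < h j \<and> h j \<le> (1/2)^k)}"
definition S4 :: "nat \<Rightarrow> (nat \<Rightarrow> real) \<Rightarrow> nat set" where
  "S4 n h = {j \<in> {1..n}. h j \<le> 1/2 \<and>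
     (\<exists>k::nat. k \<ge> 1 \<and> (1/2)^(k+1) < h j \<and> h j \<le> 2/3 * (1/2)^k)}"

text \<open>Modified growth rates h'' (for j in S3 resp. S4, with the k from the definition of the set).\<close>
definition h3 :: "real \<Rightarrow> real" where
  "h3 x = (1/2) ^ (THE k::nat. k \<ge> 1 \<and> 2/3 * (1/2)^k < x \<and> x \<le> (1/2)^k)"
definition h4 :: "real \<Rightarrow> real" where
  "h4 x = 2/3 * (1/2) ^ (THE k::nat. k \<ge> 1 \<and> (1/2)^(k+1) < x \<and> x \<le> 2/3 * (1/2)^k)"

definition sh3 :: "nat \<Rightarrow> (nat \<Rightarrow> real) \<Rightarrow> real" where
  "sh3 n h = (\<Sum>j\<in>S3 n h. h3 (h j))"
definition sh4 :: "nat \<Rightarrow> (nat \<Rightarrow> real) \<Rightarrow> real" where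
  "sh4 n h = (\<Sum>j\<in>S4 n h. h4 (h j))"

definition pi1 :: "nat \<Rightarrow> (nat \<Rightarrow> real) \<Rightarrow> int" where
  "pi1 n h = int (card (S1 n h))"
definition pi3 :: "nat \<Rightarrow> (nat \<Rightarrow> real) \<Rightarrow> int" where
  "pi3 n h = \<lfloor>sh3 n h\<rfloor>"
definition pi4 :: "nat \<Rightarrow> (nat \<Rightarrow> real) \<Rightarrow> int" where
  "pi4 n h = \<lfloor>sh4 n h\<rfloor>"
definition f3 :: "nat \<Rightarrow> (nat \<Rightarrow> real) \<Rightarrow> real" where
  "f3 n h = sh3 n h - of_int (pi3 n h)"
definition f4 :: "nat \<Rightarrow> (nat \<Rightarrow> real) \<Rightarrow> real" where
  "f4 n h = sh4 n h - of_int (pi4 n h)"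

definition z_a :: "nat \<Rightarrow> (nat \<Rightarrow> real) \<Rightarrow> real" where
  "z_a n h = of_int (pi1 n h + int (card (S2 n h)) + pi3 n h + pi4 n h
                     + \<lceil>f3 n h + f4 n h\<rceil>)"

definition z_b :: "nat \<Rightarrow> (nat \<Rightarrow> real) \<Rightarrow> ereal" where
  "z_b n h = (if S2 n h = {} then \<infinity> else
     (let hs = Max (h ` S2 n h);
          f2 = (if odd (card (S2 n h)) then 1/2 else 0 :: real)
      in ereal (2 * hs * of_int (pi1 n h + int (card (S2 n h) div 2) + pi3 n h + pi4 n h
                     + \<lceil>f2 + f3 n h + f4 n h\<rceil>))))"

definition H_PW :: "nat \<Rightarrow> (nat \<Rightarrow> real) \<Rightarrow> ereal" where
  "H_PW n h = min (ereal (z_a n h)) (z_b n h)"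

end

theory Submission
  imports Defs
begin

text \<open>Since bamboo 1 has rate 1 it lies in S1, so the hypotheses force \<pi>1 = 1 and
  \<pi>3 = \<pi>4 = 0; hence f3, f4 < 1 and z(a) = 1 + \<lceil>f3 + f4\<rceil> \<le> 3, with z(a) = 1 when n = 1.
  On the other hand every schedule has height at least 1, and at least 2 when n \<ge> 2:
  either bamboo 2 is never cut and grows without bound, or on the day after some cut of
  bamboo 2 the fast bamboo 1 has gone uncut for two days.\<close>

lemma bamboo_height_le_schedule_height:
  assumes "t \<ge> 1" "j \<in> {1..n}"
  shows "ereal (bamboo_height h \<sigma> j t) \<le> schedule_height n h \<sigma>"
  unfolding schedule_height_def
  using SUP_upper[of "(t, j)" "{1..} \<times> {1..n}" "\<lambda>p. ereal (bamboo_height h \<sigma> (snd p) (fst p))"]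
    assms by simp

lemma last_cut_first_day: "last_cut \<sigma> j 1 = 0"
  unfolding last_cut_def by simp

lemma last_cut_Suc_le:
  assumes "\<sigma> s \<noteq> j" "s \<ge> 1"
  shows "last_cut \<sigma> j (Suc s) \<le> s - 1"
proof -
  have "x \<le> s - 1" if "x \<in> insert 0 {s' \<in> {1..<Suc s}. \<sigma> s' = j}" for x
    using that assms by (cases "x = s") auto
  then show ?thesis unfolding last_cut_def by (subst Max_le_iff) auto
qed

lemma last_cut_never_cut:
  assumes "\<forall>s\<ge>1. \<sigma> s \<noteq> j"
  shows "last_cut \<sigma> j t = 0"
proof -
  have "{s \<in> {1..<t}. \<sigma> s = j} = {}" using assms by auto
  then show ?thesis unfolding last_cut_def by (simp only:) simp
qed

lemma schedule_height_ge_1: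
  assumes "n \<ge> 1" "h 1 = 1"
  shows "1 \<le> schedule_height n h \<sigma>"
proof -
  have "bamboo_height h \<sigma> 1 1 = 1"
    unfolding bamboo_height_def using last_cut_first_day assms(2) by simp
  then show ?thesis
    using bamboo_height_le_schedule_height[of 1 1 n h \<sigma>] assms(1) by (simp add: one_ereal_def)
qed

lemma schedule_height_ge_2:
  assumes "n \<ge> 2" "h 1 = 1" "h 2 > 0"
  shows "2 \<le> schedule_height n h \<sigma>"
proof (cases "\<exists>s\<ge>1. \<sigma> s = 2")
  case True
  then obtain s where s: "s \<ge> 1" "\<sigma> s = 2" by auto
  have "last_cut \<sigma> 1 (Suc s) \<le> s - 1" using last_cut_Suc_le[of \<sigma> s 1] s by simp
  then have "bamboo_height h \<sigma> 1 (Suc s) \<ge> 2"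
    unfolding bamboo_height_def using assms(2) s(1) by simp
  moreover have "ereal (bamboo_height h \<sigma> 1 (Suc s)) \<le> schedule_height n h \<sigma>"
    using bamboo_height_le_schedule_height[of "Suc s" 1 n] assms(1) by simp
  ultimately show ?thesis by (metis ereal_less_eq(3) numeral_eq_ereal order_trans)
next
  case False
  define t where "t = nat \<lceil>2 / h 2\<rceil> + 1"
  have "real t \<ge> 2 / h 2" unfolding t_def by linarith
  then have "h 2 * real t \<ge> 2" using assms(3) by (simp add: field_simps)
  then have "bamboo_height h \<sigma> 2 t \<ge> 2"
    unfolding bamboo_height_def using last_cut_never_cut[of \<sigma> 2 t] False by simp
  moreover have "ereal (bamboo_height h \<sigma> 2 t) \<le> schedule_height n h \<sigma>"
    using bamboo_height_le_schedule_height[of t 2 n] assms(1) by (simp add: t_def)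
  ultimately show ?thesis by (metis ereal_less_eq(3) numeral_eq_ereal order_trans)
qed

lemma H_opt_ge_1:
  assumes "instance_ok n h"
  shows "1 \<le> H_opt n h"
  using assms schedule_height_ge_1 unfolding H_opt_def instance_ok_def
  by (intro INF_greatest) auto

lemma H_opt_ge_2:
  assumes "instance_ok n h" "n \<ge> 2"
  shows "2 \<le> H_opt n h"
proof -
  have "0 < h n" "h n \<le> h 2" "h 1 = 1" using assms unfolding instance_ok_def by auto
  then have "2 \<le> schedule_height n h \<sigma>" for \<sigma>
    using schedule_height_ge_2 assms(2) by simp
  then show ?thesis unfolding H_opt_def by (intro INF_greatest)
qed

lemma one_mem_S1:
  assumes "instance_ok n h"
  shows "1 \<in> S1 n h"
  using assms unfolding instance_ok_def S1_def by auto

lemma pi1_ge_1: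
  assumes "instance_ok n h"
  shows "pi1 n h \<ge> 1"
proof -
  have "finite (S1 n h)" unfolding S1_def by simp
  then have "card (S1 n h) \<ge> 1" using one_mem_S1[OF assms] card_0_eq by fastforce
  then show ?thesis unfolding pi1_def by simp
qed

lemma pi3_nonneg: "pi3 n h \<ge> 0"
  unfolding pi3_def sh3_def h3_def by (simp add: sum_nonneg)

lemma pi4_nonneg: "pi4 n h \<ge> 0"
  unfolding pi4_def sh4_def h4_def by (simp add: sum_nonneg)

lemma f3_eq_sh3_lt_1:
  assumes "pi3 n h = 0"
  shows "f3 n h = sh3 n h" "sh3 n h < 1"
  using assms unfolding f3_def pi3_def by (auto simp: floor_eq_iff)

lemma f4_eq_sh4_lt_1:
  assumes "pi4 n h = 0"
  shows "f4 n h = sh4 n h" "sh4 n h < 1"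
  using assms unfolding f4_def pi4_def by (auto simp: floor_eq_iff)

lemma single_bamboo_S3_S4_empty:
  assumes "instance_ok 1 h"
  shows "S3 1 h = {}" "S4 1 h = {}"
  using assms unfolding instance_ok_def S3_def S4_def by auto

lemma z_a_eq_1_plus_ceiling_sh34:
  assumes "card (S2 n h) = 0" "pi1 n h = 1" "pi3 n h = 0" "pi4 n h = 0"
  shows "z_a n h = 1 + of_int \<lceil>sh3 n h + sh4 n h\<rceil>"
  using assms f3_eq_sh3_lt_1 f4_eq_sh4_lt_1 unfolding z_a_def by simp

theorem proposition8:
  fixes n :: nat and h :: "nat \<Rightarrow> real"
  assumes "instance_ok n h"
    and "card (S2 n h) = 0"
    and "pi1 n h + pi3 n h + pi4 n h - 1 = 0"
  shows "H_PW n h \<le> ereal (3/2) * H_opt n h"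
proof -
  have pi: "pi1 n h = 1" "pi3 n h = 0" "pi4 n h = 0"
    using pi1_ge_1[OF assms(1)] pi3_nonneg[of n h] pi4_nonneg[of n h] assms(3) by auto
  note z_a = z_a_eq_1_plus_ceiling_sh34[OF assms(2) pi]
  obtain c where z_a_le: "z_a n h \<le> 3/2 * c" and H_opt_ge: "ereal c \<le> H_opt n h"
  proof (cases "n = 1")
    case True
    then have "sh3 n h = 0" "sh4 n h = 0"
      using single_bamboo_S3_S4_empty assms(1) unfolding sh3_def sh4_def by auto
    then show ?thesis using that[of 1] z_a H_opt_ge_1[OF assms(1)] by (simp add: one_ereal_def)
  next
    case False
    then have "n \<ge> 2" using assms(1) unfolding instance_ok_def by simp
    moreover have "\<lceil>sh3 n h + sh4 n h\<rceil> \<le> 2"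
      using f3_eq_sh3_lt_1(2)[OF pi(2)] f4_eq_sh4_lt_1(2)[OF pi(3)] by (simp add: ceiling_le_iff)
    ultimately show ?thesis using that[of 2] z_a H_opt_ge_2[OF assms(1)] by simp
  qed
  have "H_PW n h \<le> ereal (z_a n h)" unfolding H_PW_def by simp
  also have "\<dots> \<le> ereal (3/2) * ereal c" using z_a_le by simp
  also have "\<dots> \<le> ereal (3/2) * H_opt n h" using H_opt_ge by (rule ereal_mult_left_mono) simp
  finally show ?thesis .
qed

end
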